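(* Let $\psi\in\mathscr D(\mathscr L)$ be real-valued, non-negative and non-decreasing on $(0,\infty)$. Let $s_0>0$ be real and let $s\in\mathbb C$ with $0<\operatorname{Re}(s)<s_0$. Then for every $t>0$, $$\left|\mathscr L\!\left(\psi(u)\frac{u^{s-1}}{\Gamma(s)}\right)(t)\right|\le C_{s,s_0}\,t^{\operatorname{Re}(s_0-s)}\,\mathscr L\!\left(\psi(u)\frac{u^{s_0-1}}{\Gamma(s_0)}\right)(t).$$
   Context: $\mathscr D(\mathscr L)$ is the space of measurable functions $\varphi:(0,\infty)\to\mathbb C$ that are integrable on every interval $(0,R)$, $R>0$, and for which $\int_0^\infty e^{-su}|\varphi(u)|\,du<\infty$ for every $s\in\mathbb C$ with $\operatorname{Re}(s)>0$. For such $\varphi$, $\mathscr L(\varphi)(t)=\int_0^\infty e^{-tu}\varphi(u)\,du$ for $t>0$. For real $s_0>0$ and $0<\operatorname{Re}(s)<s_0$ the constant $C_{s,s_0}$ is $$C_{s,s_0}=\frac{\sinh(\pi\operatorname{Im}(s))}{\pi\operatorname{Im}(s)}\sqrt{\Big(1+\frac{\operatorname{Im}(s)^2}{\operatorname{Re}(s)^2}\Big)\Big(1+\frac{\operatorname{Im}(s)^2}{\operatorname{Re}(s_0-s)^2}\Big)},$$ where the factor $\sinh(\pi y)/(\pi y)$ is interpreted as $1$ when $y=0$. *)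

theory Defs
  imports "HOL-Analysis.Analysis"
begin

definition laplace_domain :: "(real \<Rightarrow> complex) \<Rightarrow> bool" where
  "laplace_domain \<phi> \<longleftrightarrow>
     set_borel_measurable lborel {0<..} \<phi> \<and>
     (\<forall>R>0. set_integrable lborel {0<..<R} \<phi>) \<and>
     (\<forall>s::complex. Re s > 0 \<longrightarrow>
        set_integrable lborel {0<..} (\<lambda>u. exp (- (s * complex_of_real u)) * \<phi> u))"

definition laplace :: "(real \<Rightarrow> 'a::{banach,second_countable_topology}) \<Rightarrow> real \<Rightarrow> 'a" where
  "laplace \<phi> t = (LINT u:{0<..}|lborel. exp (- (t * u)) *\<^sub>R \<phi> u)"

definition sinhc :: "real \<Rightarrow> real" where
  "sinhc y = (if y = 0 then 1 else sinh (pi * y) / (pi * y))"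

definition C_const :: "complex \<Rightarrow> real \<Rightarrow> real" where
  "C_const s s0 = sinhc (Im s) *
     sqrt ((1 + (Im s)\<^sup>2 / (Re s)\<^sup>2) * (1 + (Im s)\<^sup>2 / (Re (complex_of_real s0 - s))\<^sup>2))"

end

theory Submission
  imports Defs
begin

text \<open>Write \<open>s = a + i b\<close>. Since \<open>|u\<^sup>s\<^sup>-\<^sup>1| = u\<^sup>a\<^sup>-\<^sup>1\<close>, the left-hand side is at most
  \<open>\<L>(\<psi> u\<^sup>a\<^sup>-\<^sup>1)(t) / |\<Gamma>(s)|\<close>, which reduces the estimate to two real ones.
  First, by Gauss' product for \<open>\<Gamma>\<close>, \<open>|\<Gamma>(a)/\<Gamma>(s)|\<^sup>2 = \<Prod>\<^sub>k\<^sub>\<ge>\<^sub>0 (1 + b\<^sup>2/(a+k)\<^sup>2)\<close>, and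
  dropping \<open>a\<close> from the factors with \<open>k \<ge> 1\<close> bounds this by
  \<open>(1 + b\<^sup>2/a\<^sup>2) \<Prod>\<^sub>k\<^sub>\<ge>\<^sub>1 (1 + b\<^sup>2/k\<^sup>2) = (1 + b\<^sup>2/a\<^sup>2) sinh(\<pi> b)/(\<pi> b)\<close>
  (Euler's product for the sine at \<open>i b\<close>); as \<open>sinh(\<pi> b)/(\<pi> b) \<ge> 1\<close>, this gives
  \<open>\<Gamma>(a)/|\<Gamma>(s)| \<le> C\<^sub>s\<^sub>,\<^sub>s\<^sub>0\<close>. Second, for real \<open>0 < a < \<sigma>\<close> and nondecreasing
  \<open>\<psi> \<ge> 0\<close>, \<open>\<L>(\<psi> u\<^sup>a\<^sup>-\<^sup>1)(t) \<le> t\<^sup>\<sigma>\<^sup>-\<^sup>a \<Gamma>(a)/\<Gamma>(\<sigma>) \<L>(\<psi> u\<^sup>\<sigma>\<^sup>-\<^sup>1)(t)\<close>: the constant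
  equalises the transforms of the two kernels, whose difference changes sign once.\<close>

lemma norm_Gamma_series_ratio_sq:
  fixes s :: complex and n :: nat
  assumes "Re s > 0"
  shows "(norm (Gamma_series (of_real (Re s)) n / Gamma_series s n))\<^sup>2
       = (\<Prod>k=0..n. 1 + (Im s)\<^sup>2 / (Re s + real k)\<^sup>2)"
proof -
  define a where "a = complex_of_real (Re s)"
  have norm_add: "norm (z + of_nat k) = sqrt ((Re z + real k)\<^sup>2 + (Im z)\<^sup>2)" for z :: complex and k
    by (simp add: cmod_def)
  have pochhammer_prod: "pochhammer z (n+1) = (\<Prod>k=0..n. z + of_nat k)" for z :: complex
    by (simp add: pochhammer_Suc_prod)
  have nonzero: "z + of_nat k \<noteq> 0" if "Re z > 0" for z :: complex and k
    using that by (auto simp: complex_eq_iff)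
  have "norm (exp ((a - s) * of_real (ln (of_nat n)))) = 1"
    by (simp add: a_def norm_exp_eq_Re)
  moreover have "Gamma_series a n / Gamma_series s n
      = exp ((a - s) * of_real (ln (of_nat n))) * pochhammer s (n+1) / pochhammer a (n+1)"
    unfolding Gamma_series_def using nonzero[of a] nonzero[of s] assms
    by (simp add: a_def pochhammer_prod prod_zero_iff field_simps exp_diff left_diff_distrib)
  ultimately have "norm (Gamma_series a n / Gamma_series s n)
      = (\<Prod>k=0..n. norm (s + of_nat k)) / (\<Prod>k=0..n. norm (a + of_nat k))"
    by (simp only: norm_mult norm_divide pochhammer_prod prod_norm mult_1)
  also have "(\<Prod>k=0..n. norm (a + of_nat k)) = (\<Prod>k=0..n. Re s + real k)"
    using assms by (intro prod.cong refl) (simp add: norm_add a_def)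
  also have "(\<Prod>k=0..n. norm (s + of_nat k)) / \<dots> = (\<Prod>k=0..n. norm (s + of_nat k) / (Re s + real k))"
    by (simp add: prod_dividef)
  also have "\<dots>\<^sup>2 = (\<Prod>k=0..n. 1 + (Im s)\<^sup>2 / (Re s + real k)\<^sup>2)"
    unfolding prod_power_distrib
    using assms by (intro prod.cong refl) (simp add: norm_add power_divide field_simps)
  finally show ?thesis by (simp add: a_def)
qed

lemma tendsto_prod_one_plus_sq_div_sq:
  fixes b :: real
  shows "(\<lambda>n. \<Prod>k=1..n. 1 + b\<^sup>2 / (real k)\<^sup>2) \<longlonglongrightarrow> sinhc b"
proof (cases "b = 0")
  case True
  thus ?thesis by (simp add: sinhc_def)
next
  case False
  define z where "z = \<i> * complex_of_real (pi * b)"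
  have "sin z = \<i> * of_real (sinh (pi * b))"
    unfolding z_def sin_i_times
    by (simp add: sinh_def exp_of_real[symmetric] exp_minus del: of_real_mult)
  moreover have "of_real pi * (\<i> * of_real b) = z"
    by (simp add: z_def)
  moreover have "(\<Prod>k=1..n. 1 - (\<i> * complex_of_real b)\<^sup>2 / of_nat k ^ 2)
      = of_real (\<Prod>k=1..n. 1 + b\<^sup>2 / (real k)\<^sup>2)" for n
    by (simp add: power_mult_distrib)
  ultimately have "(\<lambda>n. z * of_real (\<Prod>k=1..n. 1 + b\<^sup>2 / (real k)\<^sup>2)) \<longlonglongrightarrow> \<i> * of_real (sinh (pi * b))"
    using sin_product_formula_complex[of "\<i> * of_real b"] by simp
  hence "(\<lambda>n. inverse z * (z * of_real (\<Prod>k=1..n. 1 + b\<^sup>2 / (real k)\<^sup>2)))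
      \<longlonglongrightarrow> inverse z * (\<i> * of_real (sinh (pi * b)))"
    by (rule tendsto_mult[OF tendsto_const])
  hence "(\<lambda>n. complex_of_real (\<Prod>k=1..n. 1 + b\<^sup>2 / (real k)\<^sup>2)) \<longlonglongrightarrow> of_real (sinh (pi * b) / (pi * b))"
    using False by (simp add: z_def field_simps)
  thus ?thesis
    using False by (simp only: tendsto_of_real_iff) (simp add: sinhc_def)
qed

lemma sinhc_ge_one: "sinhc b \<ge> 1"
  by (rule LIMSEQ_le_const[OF tendsto_prod_one_plus_sq_div_sq]) (auto intro!: exI[of _ 0] prod_ge_1)

lemma Gamma_div_norm_Gamma_sq_le:
  fixes s :: complex
  assumes "Re s > 0"
  shows "(Gamma (Re s) / norm (Gamma s))\<^sup>2 \<le> (1 + (Im s)\<^sup>2 / (Re s)\<^sup>2) * sinhc (Im s)"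
proof (rule LIMSEQ_le)
  have "s \<notin> \<int>\<^sub>\<le>\<^sub>0"
    using assms by (auto elim!: nonpos_Ints_cases)
  hence "(\<lambda>n. (norm (Gamma_series (of_real (Re s)) n / Gamma_series s n))\<^sup>2)
      \<longlonglongrightarrow> (norm (Gamma (complex_of_real (Re s)) / Gamma s))\<^sup>2"
    by (intro tendsto_intros) (simp add: Gamma_eq_zero_iff)
  thus "(\<lambda>n. \<Prod>k=0..n. 1 + (Im s)\<^sup>2 / (Re s + real k)\<^sup>2) \<longlonglongrightarrow> (Gamma (Re s) / norm (Gamma s))\<^sup>2"
    unfolding norm_Gamma_series_ratio_sq[OF assms]
    using assms by (simp add: Gamma_complex_of_real norm_divide Gamma_real_pos)
  show "(\<lambda>n. (1 + (Im s)\<^sup>2 / (Re s)\<^sup>2) * (\<Prod>k=1..n. 1 + (Im s)\<^sup>2 / (real k)\<^sup>2))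
      \<longlonglongrightarrow> (1 + (Im s)\<^sup>2 / (Re s)\<^sup>2) * sinhc (Im s)"
    by (intro tendsto_intros tendsto_prod_one_plus_sq_div_sq)
  show "\<exists>N. \<forall>n\<ge>N. (\<Prod>k=0..n. 1 + (Im s)\<^sup>2 / (Re s + real k)\<^sup>2)
      \<le> (1 + (Im s)\<^sup>2 / (Re s)\<^sup>2) * (\<Prod>k=1..n. 1 + (Im s)\<^sup>2 / (real k)\<^sup>2)"
  proof (intro exI allI impI)
    fix n :: nat
    have "(\<Prod>k=1..n. 1 + (Im s)\<^sup>2 / (Re s + real k)\<^sup>2) \<le> (\<Prod>k=1..n. 1 + (Im s)\<^sup>2 / (real k)\<^sup>2)"
      using assms by (intro prod_mono) (auto intro!: divide_left_mono power_mono)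
    from mult_left_mono[OF this, of "1 + (Im s)\<^sup>2 / (Re s)\<^sup>2"]
    show "(\<Prod>k=0..n. 1 + (Im s)\<^sup>2 / (Re s + real k)\<^sup>2)
      \<le> (1 + (Im s)\<^sup>2 / (Re s)\<^sup>2) * (\<Prod>k=1..n. 1 + (Im s)\<^sup>2 / (real k)\<^sup>2)"
      by (simp add: prod.atLeast_Suc_atMost[of 0 n, simplified] add_nonneg_nonneg)
  qed
qed

lemma Gamma_div_norm_Gamma_le_C_const:
  fixes s :: complex and s0 :: real
  assumes "Re s > 0"
  shows "Gamma (Re s) / norm (Gamma s) \<le> C_const s s0"
proof -
  define A where "A = 1 + (Im s)\<^sup>2 / (Re s)\<^sup>2"
  define B where "B = 1 + (Im s)\<^sup>2 / (Re (complex_of_real s0 - s))\<^sup>2"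
  have "A \<ge> 1" "B \<ge> 1" "sinhc (Im s) \<ge> 1"
    by (simp_all add: A_def B_def sinhc_ge_one)
  have "Gamma (Re s) / norm (Gamma s) \<le> sqrt (A * sinhc (Im s))"
    using Gamma_div_norm_Gamma_sq_le[OF assms] Gamma_real_pos[OF assms]
    by (simp add: A_def real_le_rsqrt)
  also have "\<dots> = sqrt A * sqrt (sinhc (Im s))"
    by (simp add: real_sqrt_mult)
  also have "\<dots> \<le> sqrt (A * B) * sinhc (Im s)"
    using \<open>A \<ge> 1\<close> \<open>B \<ge> 1\<close> \<open>sinhc (Im s) \<ge> 1\<close>
    by (intro mult_mono real_sqrt_le_mono) (auto simp: real_sqrt_le_iff' power2_eq_square)
  finally show ?thesis
    by (simp add: C_const_def A_def B_def mult_ac)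
qed

lemma powr_le_const_mul_exp:
  fixes p \<epsilon> :: real
  assumes "\<epsilon> > 0"
  obtains K where "K > 0" "\<And>u. u \<ge> 1 \<Longrightarrow> u powr p \<le> K * exp (\<epsilon> * u)"
proof
  define q where "q = max p 1"
  have "q > 0" by (simp add: q_def)
  show "(q / \<epsilon>) powr q > 0"
    using \<open>q > 0\<close> assms by simp
  fix u :: real
  assume "u \<ge> 1"
  have "\<epsilon> * u / q \<le> exp (\<epsilon> * u / q)"
    using exp_ge_add_one_self[of "\<epsilon> * u / q"] by linarith
  hence "u \<le> q / \<epsilon> * exp (\<epsilon> * u / q)"
    using \<open>q > 0\<close> assms by (simp add: field_simps)
  have "u powr p \<le> u powr q"
    using \<open>u \<ge> 1\<close> by (intro powr_mono) (auto simp: q_def)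
  also have "\<dots> \<le> (q / \<epsilon> * exp (\<epsilon> * u / q)) powr q"
    using \<open>u \<le> _\<close> \<open>u \<ge> 1\<close> \<open>q > 0\<close> by (intro powr_mono2) auto
  also have "\<dots> = (q / \<epsilon>) powr q * exp (\<epsilon> * u)"
    using \<open>q > 0\<close> assms by (subst powr_mult) (auto simp: exp_powr_real)
  finally show "u powr p \<le> (q / \<epsilon>) powr q * exp (\<epsilon> * u)" .
qed

lemma set_integrable_laplace_domain_real:
  fixes \<psi> :: "real \<Rightarrow> real"
  assumes "laplace_domain (\<lambda>u. complex_of_real (\<psi> u))" and "x > 0"
  shows "set_integrable lborel {0<..} (\<lambda>u. exp (- (x * u)) * \<psi> u)"
proof -
  have "set_integrable lborel {0<..} (\<lambda>u. exp (- (complex_of_real x * of_real u)) * of_real (\<psi> u))"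
    using assms unfolding laplace_domain_def by simp
  hence "set_integrable lborel {0<..} (\<lambda>u. complex_of_real (exp (- (x * u)) * \<psi> u))"
    by (simp flip: exp_of_real)
  thus ?thesis
    unfolding set_integrable_def by (auto dest: integrable_Re)
qed

lemma laplace_powr:
  fixes c t :: real
  assumes "c > 0" and "t > 0"
  shows "set_integrable lborel {0<..} (\<lambda>u. exp (- (t * u)) * u powr (c - 1))"
    and "laplace (\<lambda>u. u powr (c - 1)) t = Gamma c / t powr c"
proof -
  define F where "F x = indicator {0..} x * x powr (c - 1) / exp x" for x :: real
  define G where "G u = indicator {0<..} u * (exp (- (t * u)) * u powr (c - 1))" for u :: real
  have "F \<in> borel_measurable lborel"
    unfolding F_def by measurable
  hence "has_bochner_integral lborel F (Gamma c)"
    using Gamma_conv_nn_integral_real[OF assms(1)] Gamma_real_pos[OF assms(1)]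
    by (intro has_bochner_integral_nn_integral) (auto simp: F_def)
  hence F: "integrable lborel F" "integral\<^sup>L lborel F = Gamma c"
    by (auto simp: has_bochner_integral_iff)
  have F_scaled: "F (0 + t * x) = t powr (c - 1) * G x" for x
    using assms(2)
    by (cases x "0::real" rule: linorder_cases)
       (auto simp: F_def G_def powr_mult exp_minus field_simps zero_le_mult_iff)
  have "integrable lborel (\<lambda>x. t powr (1 - c) * F (0 + t * x))"
    using lborel_integrable_real_affine[OF F(1), of t 0] assms(2) by simp
  also have "(\<lambda>x. t powr (1 - c) * F (0 + t * x)) = G"
    using assms(2) by (simp add: F_scaled[simplified] mult.assoc[symmetric] powr_add[symmetric])
  finally show "set_integrable lborel {0<..} (\<lambda>u. exp (- (t * u)) * u powr (c - 1))"
    by (simp add: set_integrable_def G_def)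
  have "Gamma c = t * integral\<^sup>L lborel (\<lambda>x. F (0 + t * x))"
    using lborel_integral_real_affine[of t F 0] assms(2) F(2) by simp
  also have "\<dots> = t powr c * integral\<^sup>L lborel G"
    using assms(2) by (simp add: F_scaled[simplified] powr_mult_base)
  moreover have "laplace (\<lambda>u. u powr (c - 1)) t = integral\<^sup>L lborel G"
    by (simp add: laplace_def set_lebesgue_integral_def G_def[abs_def])
  ultimately show "laplace (\<lambda>u. u powr (c - 1)) t = Gamma c / t powr c"
    using assms(2) by simp
qed

text \<open>Near \<open>0\<close> monotonicity bounds \<open>\<psi>\<close> by \<open>\<psi> 1\<close>; near \<open>\<infinity>\<close> half of the exponential
  absorbs the power.\<close>
lemma set_integrable_exp_mono_powr:
  fixes \<psi> :: "real \<Rightarrow> real" and c t :: real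
  assumes "laplace_domain (\<lambda>u. complex_of_real (\<psi> u))"
    and nonneg: "\<forall>u>0. \<psi> u \<ge> 0" and mono: "mono_on {0<..} \<psi>"
    and "c > 0" and "t > 0"
  shows "set_integrable lborel {0<..} (\<lambda>u. exp (- (t * u)) * (\<psi> u * u powr (c - 1)))"
proof -
  obtain K where "K > 0" and K: "\<And>u. u \<ge> 1 \<Longrightarrow> u powr (c - 1) \<le> K * exp (t / 2 * u)"
    using powr_le_const_mul_exp[of "t / 2" "c - 1"] \<open>t > 0\<close> by auto
  have half: "set_integrable lborel {0<..} (\<lambda>u. exp (- (t / 2 * u)) * \<psi> u)"
    using assms by (intro set_integrable_laplace_domain_real) auto
  have dominating: "set_integrable lborel {0<..}
      (\<lambda>u. \<psi> 1 * (exp (- (t * u)) * u powr (c - 1)) + K * (exp (- (t / 2 * u)) * \<psi> u))"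
    using half laplace_powr(1)[OF \<open>c > 0\<close> \<open>t > 0\<close>] by (intro set_integral_add) auto
  have "(\<lambda>u. indicator {0<..} u *\<^sub>R (exp (- (t / 2 * u)) * \<psi> u)) \<in> borel_measurable lborel"
    using half unfolding set_integrable_def by (rule borel_measurable_integrable)
  hence "(\<lambda>u. (indicator {0<..} u *\<^sub>R (exp (- (t / 2 * u)) * \<psi> u)) * (exp (- (t / 2 * u)) * u powr (c - 1)))
      \<in> borel_measurable lborel"
    by measurable
  also have "(\<lambda>u. (indicator {0<..} u *\<^sub>R (exp (- (t / 2 * u)) * \<psi> u)) * (exp (- (t / 2 * u)) * u powr (c - 1)))
      = (\<lambda>u. indicator {0<..} u *\<^sub>R (exp (- (t * u)) * (\<psi> u * u powr (c - 1))))"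
    by (simp add: mult_ac flip: exp_add)
  finally have measurable: "set_borel_measurable lborel {0<..} (\<lambda>u. exp (- (t * u)) * (\<psi> u * u powr (c - 1)))"
    unfolding set_borel_measurable_def .
  have bound: "\<psi> u * (exp (- (t * u)) * u powr (c - 1))
      \<le> \<psi> 1 * (exp (- (t * u)) * u powr (c - 1)) + K * (exp (- (t / 2 * u)) * \<psi> u)" if "u > 0" for u
  proof (cases "u \<le> 1")
    case True
    hence "\<psi> u \<le> \<psi> 1"
      using mono \<open>u > 0\<close> by (auto intro: mono_onD)
    thus ?thesis
      using \<open>K > 0\<close> nonneg \<open>u > 0\<close> by (intro add_increasing2 mult_right_mono) auto
  next
    case False
    have "exp (- (t * u)) * u powr (c - 1) \<le> exp (- (t * u)) * (K * exp (t / 2 * u))"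
      using K[of u] False by simp
    also have "\<dots> = K * exp (- (t / 2 * u))"
      by (simp add: mult_ac flip: exp_add)
    finally have "\<psi> u * (exp (- (t * u)) * u powr (c - 1)) \<le> \<psi> u * (K * exp (- (t / 2 * u)))"
      using nonneg \<open>u > 0\<close> by (intro mult_left_mono) auto
    thus ?thesis
      using nonneg by (intro add_increasing) (simp_all add: mult_ac)
  qed
  show ?thesis
    using dominating measurable
  proof (rule set_integrable_bound)
    show "AE u in lborel. u \<in> {0<..} \<longrightarrow> norm (exp (- (t * u)) * (\<psi> u * u powr (c - 1)))
      \<le> norm (\<psi> 1 * (exp (- (t * u)) * u powr (c - 1)) + K * (exp (- (t / 2 * u)) * \<psi> u))"
      using bound nonneg by (intro AE_I2) (auto simp: mult_ac intro: order_trans[OF _ abs_ge_self])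
  qed
qed

text \<open>A Chebyshev-type argument: \<open>K\<close> makes the kernels \<open>u\<^sup>a\<^sup>-\<^sup>1\<close> and \<open>K u\<^sup>\<sigma>\<^sup>-\<^sup>1\<close> have the
  same Laplace transform, and their difference changes sign only at \<open>u\<^sub>0\<close>, just where
  \<open>\<psi> - \<psi> u\<^sub>0\<close> does.\<close>
lemma laplace_mono_powr_le:
  fixes \<psi> :: "real \<Rightarrow> real" and a \<sigma> t :: real
  assumes "laplace_domain (\<lambda>u. complex_of_real (\<psi> u))"
    and "\<forall>u>0. \<psi> u \<ge> 0" and mono: "mono_on {0<..} \<psi>"
    and "0 < a" and "a < \<sigma>" and "t > 0"
  shows "laplace (\<lambda>u. \<psi> u * u powr (a - 1)) t
      \<le> t powr (\<sigma> - a) * Gamma a / Gamma \<sigma> * laplace (\<lambda>u. \<psi> u * u powr (\<sigma> - 1)) t"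
proof -
  have "\<sigma> > 0"
    using assms by simp
  define K where "K = t powr (\<sigma> - a) * Gamma a / Gamma \<sigma>"
  have "K > 0"
    using assms \<open>\<sigma> > 0\<close> by (simp add: K_def Gamma_real_pos)
  define u0 where "u0 = (1 / K) powr (1 / (\<sigma> - a))"
  have "u0 > 0" and u0: "K * u0 powr (\<sigma> - a) = 1"
    using \<open>K > 0\<close> \<open>a < \<sigma>\<close> by (simp_all add: u0_def powr_powr)
  have balance: "K * laplace (\<lambda>u. u powr (\<sigma> - 1)) t = laplace (\<lambda>u. u powr (a - 1)) t"
    using Gamma_real_pos[OF \<open>\<sigma> > 0\<close>] \<open>t > 0\<close>
    unfolding laplace_powr(2)[OF \<open>\<sigma> > 0\<close> \<open>t > 0\<close>] laplace_powr(2)[OF \<open>0 < a\<close> \<open>t > 0\<close>]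
    by (simp add: K_def powr_diff field_simps)
  have pointwise: "\<psi> u * u powr (a - 1) + \<psi> u0 * (K * u powr (\<sigma> - 1))
      \<le> K * (\<psi> u * u powr (\<sigma> - 1)) + \<psi> u0 * u powr (a - 1)" if "u > 0" for u
  proof -
    have "(\<psi> u - \<psi> u0) * (K * u powr (\<sigma> - a) - 1) \<ge> 0"
    proof (cases "u0 \<le> u")
      case True
      hence "\<psi> u0 \<le> \<psi> u" and "u0 powr (\<sigma> - a) \<le> u powr (\<sigma> - a)"
        using mono \<open>u0 > 0\<close> \<open>a < \<sigma>\<close> by (auto intro: mono_onD powr_mono2)
      thus ?thesis
        using u0 \<open>K > 0\<close> by (intro mult_nonneg_nonneg) (auto simp flip: u0 intro: mult_left_mono)
    next
      case False
      hence "\<psi> u \<le> \<psi> u0" and "u powr (\<sigma> - a) \<le> u0 powr (\<sigma> - a)"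
        using mono \<open>u > 0\<close> \<open>a < \<sigma>\<close> by (auto intro: mono_onD powr_mono2)
      thus ?thesis
        using u0 \<open>K > 0\<close> by (intro mult_nonpos_nonpos) (auto simp flip: u0 intro: mult_left_mono)
    qed
    hence "0 \<le> u powr (a - 1) * ((\<psi> u - \<psi> u0) * (K * u powr (\<sigma> - a) - 1))"
      by simp
    thus ?thesis
      using \<open>u > 0\<close> by (simp add: algebra_simps flip: powr_add)
  qed
  have integrable: "set_integrable lborel {0<..} (\<lambda>u. exp (- (t * u)) * (\<psi> u * u powr (c - 1)))"
      "set_integrable lborel {0<..} (\<lambda>u. exp (- (t * u)) * u powr (c - 1))" if "c > 0" for c
    using that assms by (auto intro: set_integrable_exp_mono_powr laplace_powr(1))
  have "(LINT u:{0<..}|lborel. exp (- (t * u)) * (\<psi> u * u powr (a - 1))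
        + \<psi> u0 * K * (exp (- (t * u)) * u powr (\<sigma> - 1)))
      \<le> (LINT u:{0<..}|lborel. K * (exp (- (t * u)) * (\<psi> u * u powr (\<sigma> - 1)))
        + \<psi> u0 * (exp (- (t * u)) * u powr (a - 1)))"
  proof (rule set_integral_mono)
    fix u :: real
    assume "u \<in> {0<..}"
    from mult_left_mono[OF pointwise exp_ge_zero, of u "- (t * u)"] this
    show "exp (- (t * u)) * (\<psi> u * u powr (a - 1)) + \<psi> u0 * K * (exp (- (t * u)) * u powr (\<sigma> - 1))
      \<le> K * (exp (- (t * u)) * (\<psi> u * u powr (\<sigma> - 1))) + \<psi> u0 * (exp (- (t * u)) * u powr (a - 1))"
      by (simp add: algebra_simps)
  qed (use integrable[OF \<open>0 < a\<close>] integrable[OF \<open>\<sigma> > 0\<close>] in auto)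
  hence "laplace (\<lambda>u. \<psi> u * u powr (a - 1)) t + \<psi> u0 * (K * laplace (\<lambda>u. u powr (\<sigma> - 1)) t)
      \<le> K * laplace (\<lambda>u. \<psi> u * u powr (\<sigma> - 1)) t + \<psi> u0 * laplace (\<lambda>u. u powr (a - 1)) t"
    using integrable[OF \<open>0 < a\<close>] integrable[OF \<open>\<sigma> > 0\<close>]
    by (simp add: laplace_def mult.assoc)
  thus ?thesis
    unfolding K_def[symmetric] balance by simp
qed

lemma laplace_divide:
  fixes f :: "real \<Rightarrow> 'a::{real_normed_field, field, banach, second_countable_topology}"
  shows "laplace (\<lambda>u. f u / c) t = laplace f t / c"
  by (simp add: laplace_def scaleR_conv_of_real)

lemma laplace_nonneg:
  fixes f :: "real \<Rightarrow> real"
  assumes "\<forall>u>0. f u \<ge> 0"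
  shows "laplace f t \<ge> 0"
  unfolding laplace_def set_lebesgue_integral_def
  using assms by (intro integral_nonneg_AE AE_I2) (simp add: indicator_def)

lemma norm_laplace_powr_le:
  fixes \<psi> :: "real \<Rightarrow> real" and s :: complex
  assumes "\<forall>u>0. \<psi> u \<ge> 0"
  shows "norm (laplace (\<lambda>u. complex_of_real (\<psi> u) * complex_of_real u powr (s - 1)) t)
      \<le> laplace (\<lambda>u. \<psi> u * u powr (Re s - 1)) t"
proof -
  have norm_eq: "norm (indicator {0<..} u *\<^sub>R (exp (- (t * u)) *\<^sub>R (of_real (\<psi> u) * of_real u powr (s - 1))))
      = indicator {0<..} u *\<^sub>R (exp (- (t * u)) *\<^sub>R (\<psi> u * u powr (Re s - 1)))" for u
    using assms by (cases "u > 0") (simp_all add: norm_mult norm_powr_real_powr)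
  show ?thesis
    unfolding laplace_def set_lebesgue_integral_def
    using integral_norm_bound[of lborel "\<lambda>u. indicator {0<..} u *\<^sub>R
      (exp (- (t * u)) *\<^sub>R (of_real (\<psi> u) * of_real u powr (s - 1)))"]
    by (simp only: norm_eq)
qed

theorem mainTheorem1:
  fixes \<psi> :: "real \<Rightarrow> real" and s0 t :: real and s :: complex
  assumes "laplace_domain (\<lambda>u. complex_of_real (\<psi> u))"
    and "\<forall>u>0. \<psi> u \<ge> 0"
    and "mono_on {0<..} \<psi>"
    and "s0 > 0" and "0 < Re s" and "Re s < s0"
    and "t > 0"
  shows "norm (laplace (\<lambda>u. complex_of_real (\<psi> u) * (complex_of_real u powr (s - 1)) / Gamma s) t)
     \<le> C_const s s0 * t powr (Re (complex_of_real s0 - s)) *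
        laplace (\<lambda>u. \<psi> u * u powr (s0 - 1) / Gamma s0) t"
proof -
  let ?L = "\<lambda>c. laplace (\<lambda>u. \<psi> u * u powr (c - 1)) t"
  have "norm (laplace (\<lambda>u. complex_of_real (\<psi> u) * (complex_of_real u powr (s - 1)) / Gamma s) t)
      = norm (laplace (\<lambda>u. complex_of_real (\<psi> u) * complex_of_real u powr (s - 1)) t) / norm (Gamma s)"
    by (simp add: laplace_divide norm_divide)
  also have "\<dots> \<le> ?L (Re s) / norm (Gamma s)"
    using assms by (intro divide_right_mono norm_laplace_powr_le) auto
  also have "\<dots> \<le> t powr (s0 - Re s) * Gamma (Re s) / Gamma s0 * ?L s0 / norm (Gamma s)"
    using assms by (intro divide_right_mono laplace_mono_powr_le) auto
  also have "\<dots> = Gamma (Re s) / norm (Gamma s) * t powr (s0 - Re s) * (?L s0 / Gamma s0)"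
    by (simp add: mult_ac)
  also have "\<dots> \<le> C_const s s0 * t powr (s0 - Re s) * (?L s0 / Gamma s0)"
    using assms Gamma_real_pos[of s0]
    by (intro mult_right_mono Gamma_div_norm_Gamma_le_C_const divide_nonneg_pos laplace_nonneg) auto
  finally show ?thesis
    by (simp add: laplace_divide)
qed

end
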